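(* Let $n\ge 1$ and consider the order structure on the keys $[n]=\{1,\dots,n\}$, whose ranges are all intervals $\{i_1,i_1+1,\dots,i_2\}$ with $1\le i_1\le i_2\le n$. (i) For every vector $p=(p_1,\dots,p_n)\in[0,1]^n$ with $\sum_{i=1}^n p_i$ an integer, there exists a VarOpt sample distribution for $p$ whose maximum range discrepancy (with respect to intervals) satisfies $\Delta\le 2$. (ii) For every fixed real number $\Delta<2$, there exist $n$ and a vector $p\in[0,1]^n$ with $\sum_i p_i$ an integer such that no VarOpt sample distribution for $p$ has maximum range discrepancy (with respect to intervals) at most $\Delta$.
   Context: Given $p=(p_1,\dots,p_n)\in[0,1]^n$ with $s=\sum_i p_i$ an integer (in the paper the $p_i$ are the IPPS inclusion probabilities $p_i=\min\{1,w_i/\tau\}$ of weighted keys), a sample distribution is a probability distribution over subsets $S\subseteq[n]$. It is called VarOpt for $p$ if: (a) $\Pr[i\in S]=p_i$ for every $i$; (b) $|S|=s$ with probability one; (c) for every $J\subseteq[n]$, $\Pr[J\subseteq S]\le\prod_{i\in J}p_i$ and $\Pr[J\cap S=\emptyset]\le\prod_{i\in J}(1-p_i)$. For a family of ranges $\mathcal{R}$ (subsets of $[n]$), the maximum range discrepancy of a sample distribution $\Omega$ is $\Delta=\max_{S\in\operatorname{supp}\Omega}\max_{R\in\mathcal{R}}\big|\,|S\cap R|-\sum_{i\in R}p_i\,\big|$. *)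

theory Defs
  imports "HOL-Probability.Probability"
begin

text \<open>Keys are 1..n; p is given as a function nat => real, only its values on 1..n matter.
 A sample distribution is a pmf over subsets of the keys.\<close>

definition valid_probs :: "nat \<Rightarrow> (nat \<Rightarrow> real) \<Rightarrow> bool" where
  "valid_probs n p \<longleftrightarrow> (\<forall>i\<in>{1..n}. 0 \<le> p i \<and> p i \<le> 1) \<and> (\<Sum>i\<in>{1..n}. p i) \<in> \<int>"

definition varopt :: "nat \<Rightarrow> (nat \<Rightarrow> real) \<Rightarrow> nat set pmf \<Rightarrow> bool" where
  "varopt n p \<Omega> \<longleftrightarrow>
     (\<forall>S\<in>set_pmf \<Omega>. S \<subseteq> {1..n}) \<and>
     (\<forall>i\<in>{1..n}. measure_pmf.prob \<Omega> {S. i \<in> S} = p i) \<and>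
     (\<forall>S\<in>set_pmf \<Omega>. real (card S) = (\<Sum>i\<in>{1..n}. p i)) \<and>
     (\<forall>J. J \<subseteq> {1..n} \<longrightarrow>
        measure_pmf.prob \<Omega> {S. J \<subseteq> S} \<le> (\<Prod>i\<in>J. p i) \<and>
        measure_pmf.prob \<Omega> {S. J \<inter> S = {}} \<le> (\<Prod>i\<in>J. 1 - p i))"

definition interval_disc_le :: "nat \<Rightarrow> (nat \<Rightarrow> real) \<Rightarrow> nat set pmf \<Rightarrow> real \<Rightarrow> bool" where
  "interval_disc_le n p \<Omega> D \<longleftrightarrow>
     (\<forall>S\<in>set_pmf \<Omega>. \<forall>i1 i2. 1 \<le> i1 \<and> i1 \<le> i2 \<and> i2 \<le> n \<longrightarrow>
        \<bar>real (card (S \<inter> {i1..i2})) - (\<Sum>i\<in>{i1..i2}. p i)\<bar> \<le> D)"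

end

theory Submission
  imports Defs
begin

text \<open>
  Upper bound: take the two leftmost keys \<open>i < j\<close> with fractional probability and replace
  them, by a random choice that keeps both marginals, keeps \<open>p\<^sub>i + p\<^sub>j\<close> and does not
  increase the probability that both (or neither) are chosen, by a pair in which one key is
  settled to \<open>0\<close> or \<open>1\<close>. Recursing and mixing yields a VarOpt distribution in which every
  prefix \<open>{1..k}\<close> has discrepancy at most \<open>1\<close>: a prefix containing \<open>j\<close> has the same expected
  count in both branches, and a prefix not containing \<open>j\<close> has at most one fractional key.
  An interval is a difference of two prefixes.

  Lower bound: for \<open>p \<equiv> 1 / m\<close> on \<open>n = m s\<close> keys, VarOpt forces \<open>Pr[S] \<le> m\<^sup>-\<^sup>s\<close> for every
  sample \<open>S\<close>. If all intervals have discrepancy \<open>D < 2\<close>, the \<open>k\<close>-th element of \<open>S\<close> lies at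
  \<open>k m\<close> up to a common shift of size \<open>O(m)\<close> and an individual deviation of at most
  \<open>m (D - 1) + 1\<close>, so there are at most \<open>(3 m + 2) (m (D - 1) + 2)\<^sup>s\<close> possible samples --
  fewer than \<open>m\<^sup>s\<close> for suitable \<open>m\<close> and \<open>s\<close>.
\<close>

lemma varoptD:
  assumes "varopt n p \<Omega>"
  shows varopt_support: "S \<in> set_pmf \<Omega> \<Longrightarrow> S \<subseteq> {1..n}"
    and varopt_marginal: "l \<in> {1..n} \<Longrightarrow> measure_pmf.prob \<Omega> {S. l \<in> S} = p l"
    and varopt_card: "S \<in> set_pmf \<Omega> \<Longrightarrow> real (card S) = (\<Sum>i\<in>{1..n}. p i)"
    and varopt_inclusion: "J \<subseteq> {1..n} \<Longrightarrow> measure_pmf.prob \<Omega> {S. J \<subseteq> S} \<le> (\<Prod>i\<in>J. p i)"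
    and varopt_exclusion: "J \<subseteq> {1..n} \<Longrightarrow> measure_pmf.prob \<Omega> {S. J \<inter> S = {}} \<le> (\<Prod>i\<in>J. 1 - p i)"
  using assms unfolding varopt_def by blast+

section \<open>Pair aggregation\<close>

definition mix_pmf :: "real \<Rightarrow> 'a pmf \<Rightarrow> 'a pmf \<Rightarrow> 'a pmf" where
  "mix_pmf lam A B = bind_pmf (bernoulli_pmf lam) (\<lambda>b. if b then A else B)"

lemma set_pmf_mix_pmf_subset: "set_pmf (mix_pmf lam A B) \<subseteq> set_pmf A \<union> set_pmf B"
  unfolding mix_pmf_def by (auto split: if_splits)

lemma prob_mix_pmf:
  assumes "0 \<le> lam" "lam \<le> 1"
  shows "measure_pmf.prob (mix_pmf lam A B) E
         = lam * measure_pmf.prob A E + (1 - lam) * measure_pmf.prob B E"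
proof -
  have "ennreal (measure_pmf.prob (mix_pmf lam A B) E)
      = (\<integral>\<^sup>+b. emeasure (measure_pmf (if b then A else B)) E \<partial>measure_pmf (bernoulli_pmf lam))"
    unfolding mix_pmf_def measure_pmf.emeasure_eq_measure[symmetric] by (rule emeasure_bind_pmf)
  also have "\<dots> = emeasure (measure_pmf A) E * lam + emeasure (measure_pmf B) E * (1 - lam)"
    using assms by (subst nn_integral_bernoulli_pmf) auto
  also have "\<dots> = ennreal (lam * measure_pmf.prob A E + (1 - lam) * measure_pmf.prob B E)"
    using assms
    by (simp only: measure_pmf.emeasure_eq_measure ennreal_mult''[symmetric] ennreal_plus[symmetric])
       (simp_all add: mult.commute)
  finally show ?thesis
    using assms by (subst (asm) ennreal_inj) auto
qed

lemma set_pmf_subset_if_prob_eq_1: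
  assumes "measure_pmf.prob \<Omega> A = 1"
  shows "set_pmf \<Omega> \<subseteq> A"
  using assms by (subst (asm) measure_pmf.prob_eq_1) (auto simp: AE_measure_pmf_iff)

lemma discrepancy_le_card_fractional:
  fixes p :: "'a \<Rightarrow> real"
  assumes fin: "finite K" and S: "S \<in> set_pmf \<Omega>"
    and marg: "\<forall>l\<in>K. measure_pmf.prob \<Omega> {S. l \<in> S} = p l"
    and rng: "\<forall>l\<in>K. 0 \<le> p l \<and> p l \<le> 1"
  shows "\<bar>real (card (S \<inter> K)) - sum p K\<bar> \<le> real (card {l\<in>K. 0 < p l \<and> p l < 1})"
proof -
  let ?F = "{l\<in>K. 0 < p l \<and> p l < 1}"
  let ?e = "\<lambda>l. of_bool (l \<in> S) - p l"
  have settled: "?e l = 0" if "l \<in> K - ?F" for l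
  proof -
    have "p l = 0 \<or> p l = 1" using rng that by force
    thus ?thesis
      using marg that S set_pmf_subset_if_prob_eq_1[of \<Omega> "{S. l \<in> S}"]
        measure_pmf_zero_iff[of \<Omega> "{S. l \<in> S}"] by auto
  qed
  have "real (card (S \<inter> K)) - sum p K = (\<Sum>l\<in>K. ?e l)"
    using fin by (simp add: sum_subtractf Int_def conj_commute)
  also have "\<dots> = (\<Sum>l\<in>?F. ?e l)"
    using fin settled by (intro sum.mono_neutral_right) auto
  finally have "\<bar>real (card (S \<inter> K)) - sum p K\<bar> \<le> (\<Sum>l\<in>?F. \<bar>?e l\<bar>)"
    by (simp only: sum_abs)
  also have "\<dots> \<le> (\<Sum>l\<in>?F. 1)" by (intro sum_mono) auto
  finally show ?thesis by simp
qed

lemma varopt_return_pmf: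
  assumes p01: "\<forall>l\<in>{1..n}. p l = 0 \<or> p l = 1"
  shows "varopt n p (return_pmf {l\<in>{1..n}. p l = 1})"
proof -
  define A where "A = {l\<in>{1..n}. p l = 1}"
  have "(\<Prod>i\<in>J. p i) = of_bool (J \<subseteq> A) \<and> (\<Prod>i\<in>J. 1 - p i) = of_bool (J \<inter> A = {})"
    if J: "J \<subseteq> {1..n}" for J
  proof -
    have fin: "finite J" using J finite_subset by blast
    have p0: "p l = 0" if "l \<in> J - A" for l using p01 J that A_def by auto
    have p1: "p l = 1" if "l \<in> J \<inter> A" for l using that A_def by auto
    show ?thesis
    proof (intro conjI)
      show "(\<Prod>i\<in>J. p i) = of_bool (J \<subseteq> A)"
        using fin p0 p1 by (cases "J \<subseteq> A") (auto simp: prod_zero_iff intro!: prod.neutral)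
      show "(\<Prod>i\<in>J. 1 - p i) = of_bool (J \<inter> A = {})"
        using fin p0 p1 by (cases "J \<inter> A = {}") (auto simp: prod_zero_iff disjoint_iff intro!: prod.neutral)
    qed
  qed
  moreover have "(\<Sum>i\<in>{1..n}. p i) = card A"
  proof -
    have "(\<Sum>i\<in>{1..n}. p i) = (\<Sum>i\<in>{1..n}. of_bool (p i = 1))"
      using p01 by (intro sum.cong) auto
    thus ?thesis by (simp add: A_def Int_def conj_commute)
  qed
  ultimately show ?thesis
    using p01 unfolding varopt_def A_def[symmetric] by (auto simp: A_def indicator_def)
qed

lemma prod_split_pair:
  fixes f :: "'a \<Rightarrow> real"
  assumes "finite J" "i \<noteq> j"
  shows "prod f J = prod f (J - {i} - {j}) * (if i \<in> J then f i else 1) * (if j \<in> J then f j else 1)"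
proof -
  have split: "prod f K = (if x \<in> K then f x else 1) * prod f (K - {x})" if "finite K" for K x
    using that by (cases "x \<in> K") (auto simp: prod.remove)
  show ?thesis
    using split[of J i] split[of "J - {i}" j] assms by (auto simp: algebra_simps)
qed

lemma mix_prod_le:
  fixes a b c :: "'a \<Rightarrow> real"
  assumes fin: "finite J" and ij: "i \<noteq> j"
    and eq: "\<forall>l. l \<noteq> i \<and> l \<noteq> j \<longrightarrow> a l = c l \<and> b l = c l"
    and mi: "lam * a i + (1 - lam) * b i = c i" and mj: "lam * a j + (1 - lam) * b j = c j"
    and mij: "lam * (a i * a j) + (1 - lam) * (b i * b j) \<le> c i * c j"
    and nonneg: "\<forall>l\<in>J. 0 \<le> c l"
  shows "lam * (\<Prod>l\<in>J. a l) + (1 - lam) * (\<Prod>l\<in>J. b l) \<le> (\<Prod>l\<in>J. c l)"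
proof -
  define P where "P = prod c (J - {i} - {j})"
  have "prod a (J - {i} - {j}) = P" "prod b (J - {i} - {j}) = P"
    unfolding P_def using eq by (auto intro!: prod.cong)
  then have A: "prod a J = P * (if i \<in> J then a i else 1) * (if j \<in> J then a j else 1)"
    and B: "prod b J = P * (if i \<in> J then b i else 1) * (if j \<in> J then b j else 1)"
    and C: "prod c J = P * (if i \<in> J then c i else 1) * (if j \<in> J then c j else 1)"
    using prod_split_pair[OF fin ij] unfolding P_def by simp_all
  have "0 \<le> P" unfolding P_def using nonneg by (intro prod_nonneg) auto
  then have "P * (lam * (a i * a j) + (1 - lam) * (b i * b j)) \<le> P * (c i * c j)"
    by (rule mult_left_mono[OF mij])
  then show ?thesis
    unfolding A B C using mi mj
    by (cases "i \<in> J"; cases "j \<in> J") (simp_all add: algebra_simps flip: mi mj)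
qed

text \<open>If \<open>x + y \<le> 1\<close> the pair becomes \<open>(x + y, 0)\<close> or \<open>(0, x + y)\<close>, otherwise
  \<open>(1, x + y - 1)\<close> or \<open>(x + y - 1, 1)\<close>, with the probability that keeps both marginals.\<close>

lemma pair_aggregation:
  fixes x y :: real
  assumes x0: "0 < x" and x1: "x < 1" and y0: "0 < y" and y1: "y < 1"
  obtains lam a1 a2 b1 b2 where "0 \<le> lam" "lam \<le> 1"
    "lam * a1 + (1 - lam) * b1 = x" "lam * a2 + (1 - lam) * b2 = y"
    "a1 + a2 = x + y" "b1 + b2 = x + y"
    "a1 \<in> {0..1}" "a2 \<in> {0..1}" "b1 \<in> {0..1}" "b2 \<in> {0..1}"
    "a1 \<in> {0, 1} \<or> a2 \<in> {0, 1}" "b1 \<in> {0, 1} \<or> b2 \<in> {0, 1}"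
    "lam * (a1 * a2) + (1 - lam) * (b1 * b2) \<le> x * y"
    "lam * ((1 - a1) * (1 - a2)) + (1 - lam) * ((1 - b1) * (1 - b2)) \<le> (1 - x) * (1 - y)"
proof (cases "x + y \<le> 1")
  case True
  define lam where "lam = x / (x + y)"
  have "lam * (x + y) = x" unfolding lam_def using x0 y0 by simp
  moreover have "0 \<le> lam" "lam \<le> 1" unfolding lam_def using x0 y0 by auto
  moreover have "1 - (x + y) \<le> (1 - x) * (1 - y)" using x0 y0 by (simp add: algebra_simps)
  ultimately show ?thesis
    using that[of lam "x + y" 0 0 "x + y"] True x0 y0 by (auto simp: algebra_simps)
next
  case False
  define lam where "lam = (1 - y) / (2 - x - y)"
  have "lam * (2 - x - y) = 1 - y" unfolding lam_def using x1 y1 by simp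
  moreover have "0 \<le> lam" "lam \<le> 1" unfolding lam_def using x1 y1 by auto
  moreover have "x + y - 1 \<le> x * y"
    using mult_nonneg_nonneg[of "1 - x" "1 - y"] x1 y1 by (simp add: algebra_simps)
  ultimately show ?thesis
    using that[of lam 1 "x + y - 1" "x + y - 1" 1] False x1 y1 by (auto simp: algebra_simps)
qed

lemma sum_update_pair:
  fixes f :: "'a \<Rightarrow> real"
  assumes "finite K" "i \<in> K" "j \<in> K" "i \<noteq> j" "a + b = f i + f j"
  shows "sum (f(i := a, j := b)) K = sum f K"
proof -
  have split: "sum g K = g i + g j + sum g (K - {i} - {j})" for g :: "'a \<Rightarrow> real"
    using assms(1-4) by (simp add: sum.remove[of K i] sum.remove[of "K - {i}" j])
  have "sum (f(i := a, j := b)) (K - {i} - {j}) = sum f (K - {i} - {j})"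
    by (intro sum.cong) auto
  then show ?thesis
    using split[of f] split[of "f(i := a, j := b)"] assms(4,5) by simp
qed

lemma varopt_mix_pair:
  fixes p :: "nat \<Rightarrow> real" and i j :: nat and a1 a2 b1 b2 :: real
  defines "pA \<equiv> p(i := a1, j := a2)" and "pB \<equiv> p(i := b1, j := b2)"
  assumes A: "varopt n pA \<Omega>A" and B: "varopt n pB \<Omega>B"
    and ij: "i \<noteq> j" "i \<in> {1..n}" "j \<in> {1..n}"
    and rng: "\<forall>l\<in>{1..n}. 0 \<le> p l \<and> p l \<le> 1"
    and lam: "0 \<le> lam" "lam \<le> 1"
    and mi: "lam * a1 + (1 - lam) * b1 = p i" and mj: "lam * a2 + (1 - lam) * b2 = p j"
    and sa: "a1 + a2 = p i + p j" and sb: "b1 + b2 = p i + p j"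
    and incl: "lam * (a1 * a2) + (1 - lam) * (b1 * b2) \<le> p i * p j"
    and excl: "lam * ((1 - a1) * (1 - a2)) + (1 - lam) * ((1 - b1) * (1 - b2)) \<le> (1 - p i) * (1 - p j)"
  shows "varopt n p (mix_pmf lam \<Omega>A \<Omega>B)"
  unfolding varopt_def
proof (intro conjI ballI allI impI)
  fix S assume "S \<in> set_pmf (mix_pmf lam \<Omega>A \<Omega>B)"
  then have S: "S \<in> set_pmf \<Omega>A \<or> S \<in> set_pmf \<Omega>B"
    using set_pmf_mix_pmf_subset[of lam \<Omega>A \<Omega>B] by auto
  moreover have "sum pA {1..n} = sum p {1..n}" "sum pB {1..n} = sum p {1..n}"
    using sum_update_pair[of "{1..n}" i j] ij sa sb unfolding pA_def pB_def by simp_all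
  ultimately show "S \<subseteq> {1..n}" "real (card S) = (\<Sum>i\<in>{1..n}. p i)"
    using varopt_support[OF A] varopt_support[OF B] varopt_card[OF A] varopt_card[OF B] by auto
next
  fix l assume l: "l \<in> {1..n}"
  have "measure_pmf.prob (mix_pmf lam \<Omega>A \<Omega>B) {S. l \<in> S} = lam * pA l + (1 - lam) * pB l"
    using varopt_marginal[OF A l] varopt_marginal[OF B l] by (simp add: prob_mix_pmf[OF lam])
  also have "\<dots> = p l"
    using mi mj ij(1) by (cases "l = i"; cases "l = j") (simp_all add: pA_def pB_def algebra_simps)
  finally show "measure_pmf.prob (mix_pmf lam \<Omega>A \<Omega>B) {S. l \<in> S} = p l" .
next
  fix J assume J: "J \<subseteq> {1..n}"
  have fin: "finite J" using J finite_subset by blast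
  have le_mix: "measure_pmf.prob (mix_pmf lam \<Omega>A \<Omega>B) E \<le> lam * prod fA J + (1 - lam) * prod fB J"
    if "measure_pmf.prob \<Omega>A E \<le> prod fA J" "measure_pmf.prob \<Omega>B E \<le> prod fB J"
    for E and fA fB :: "nat \<Rightarrow> real"
    unfolding prob_mix_pmf[OF lam] using that lam by (intro add_mono mult_left_mono) auto
  have "lam * (\<Prod>l\<in>J. pA l) + (1 - lam) * (\<Prod>l\<in>J. pB l) \<le> (\<Prod>l\<in>J. p l)"
  proof (rule mix_prod_le[OF fin ij(1)])
    show "\<forall>l. l \<noteq> i \<and> l \<noteq> j \<longrightarrow> pA l = p l \<and> pB l = p l" by (simp add: pA_def pB_def)
  qed (use rng J mi mj incl ij(1) in \<open>auto simp: pA_def pB_def\<close>)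
  with le_mix[OF varopt_inclusion[OF A J] varopt_inclusion[OF B J]]
  show "measure_pmf.prob (mix_pmf lam \<Omega>A \<Omega>B) {S. J \<subseteq> S} \<le> (\<Prod>i\<in>J. p i)" by linarith
  have "lam * (\<Prod>l\<in>J. 1 - pA l) + (1 - lam) * (\<Prod>l\<in>J. 1 - pB l) \<le> (\<Prod>l\<in>J. 1 - p l)"
  proof (rule mix_prod_le[OF fin ij(1)])
    show "\<forall>l. l \<noteq> i \<and> l \<noteq> j \<longrightarrow> 1 - pA l = 1 - p l \<and> 1 - pB l = 1 - p l"
      by (simp add: pA_def pB_def)
    show "lam * (1 - pA i) + (1 - lam) * (1 - pB i) = 1 - p i"
      using mi ij(1) by (simp add: pA_def pB_def algebra_simps)
    show "lam * (1 - pA j) + (1 - lam) * (1 - pB j) = 1 - p j"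
      using mj by (simp add: pA_def pB_def algebra_simps)
  qed (use rng J excl ij(1) in \<open>auto simp: pA_def pB_def\<close>)
  with le_mix[OF varopt_exclusion[OF A J] varopt_exclusion[OF B J]]
  show "measure_pmf.prob (mix_pmf lam \<Omega>A \<Omega>B) {S. J \<inter> S = {}} \<le> (\<Prod>i\<in>J. 1 - p i)" by linarith
qed

definition fractional_keys :: "nat \<Rightarrow> (nat \<Rightarrow> real) \<Rightarrow> nat set" where
  "fractional_keys n p = {i \<in> {1..n}. 0 < p i \<and> p i < 1}"

lemma fractional_keys_ne_singleton:
  assumes "valid_probs n p"
  shows "fractional_keys n p \<noteq> {i}"
proof
  assume F: "fractional_keys n p = {i}"
  then have i: "i \<in> {1..n}" "0 < p i" "p i < 1" by (auto simp: fractional_keys_def)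
  have "(\<Sum>l\<in>{1..n} - {i}. p l) \<in> \<int>"
  proof (rule Ints_sum)
    fix l assume "l \<in> {1..n} - {i}"
    then have "p l = 0 \<or> p l = 1"
      using assms F by (force simp: valid_probs_def fractional_keys_def)
    then show "p l \<in> \<int>" by auto
  qed
  moreover have "p i = (\<Sum>l\<in>{1..n}. p l) - (\<Sum>l\<in>{1..n} - {i}. p l)"
    using i(1) by (simp add: sum.remove)
  ultimately have "p i \<in> \<int>" using assms by (simp add: valid_probs_def)
  then show False using i by (auto elim: Ints_cases)
qed

lemma two_leftmost_fractional_keys:
  assumes "valid_probs n p" "fractional_keys n p \<noteq> {}"
  obtains i j where "i \<in> fractional_keys n p" "j \<in> fractional_keys n p" "i < j"
    "\<forall>l\<in>fractional_keys n p. l = i \<or> j \<le> l"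
proof -
  let ?F = "fractional_keys n p"
  have fin: "finite ?F" by (simp add: fractional_keys_def)
  define i where "i = Min ?F"
  have i: "i \<in> ?F" unfolding i_def using fin assms(2) by (rule Min_in)
  then have "?F - {i} \<noteq> {}" using fractional_keys_ne_singleton[OF assms(1)] by blast
  then have j: "Min (?F - {i}) \<in> ?F - {i}" using fin by (intro Min_in) auto
  moreover have "i \<le> l" if "l \<in> ?F" for l unfolding i_def using fin that by simp
  moreover have "l = i \<or> Min (?F - {i}) \<le> l" if "l \<in> ?F" for l
    using fin that by (cases "l = i") auto
  ultimately show ?thesis using that[of i "Min (?F - {i})"] i by fastforce
qed

lemma fractional_keys_update_pair_psubset:
  assumes "i \<in> fractional_keys n p" "j \<in> fractional_keys n p" "i \<noteq> j" "a \<in> {0, 1} \<or> b \<in> {0, 1}"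
  shows "fractional_keys n (p(i := a, j := b)) \<subset> fractional_keys n p"
  using assms unfolding fractional_keys_def by auto

lemma valid_probs_update_pair:
  assumes "valid_probs n p" "i \<in> {1..n}" "j \<in> {1..n}" "i \<noteq> j"
    "a \<in> {0..1}" "b \<in> {0..1}" "a + b = p i + p j"
  shows "valid_probs n (p(i := a, j := b))"
  using assms sum_update_pair[of "{1..n}" i j a b p] unfolding valid_probs_def by auto

definition prefix_disc_le :: "nat \<Rightarrow> (nat \<Rightarrow> real) \<Rightarrow> nat set pmf \<Rightarrow> real \<Rightarrow> bool" where
  "prefix_disc_le n p \<Omega> D \<longleftrightarrow>
     (\<forall>S\<in>set_pmf \<Omega>. \<forall>k\<le>n. \<bar>real (card (S \<inter> {1..k})) - (\<Sum>i\<in>{1..k}. p i)\<bar> \<le> D)"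

lemma interval_disc_le_if_prefix_disc_le:
  assumes "prefix_disc_le n p \<Omega> D"
  shows "interval_disc_le n p \<Omega> (2 * D)"
  unfolding interval_disc_le_def
proof (intro ballI allI impI)
  fix S i1 i2 assume S: "S \<in> set_pmf \<Omega>" and r: "1 \<le> i1 \<and> i1 \<le> i2 \<and> i2 \<le> n"
  have split: "{1..i2} = {1..i1 - 1} \<union> {i1..i2}" "{1..i1 - 1} \<inter> {i1..i2} = {}" using r by auto
  have "card (S \<inter> {1..i2}) = card (S \<inter> {1..i1 - 1}) + card (S \<inter> {i1..i2})"
    unfolding split(1) Int_Un_distrib by (rule card_Un_disjoint) (use split(2) in auto)
  moreover have "(\<Sum>i\<in>{1..i2}. p i) = (\<Sum>i\<in>{1..i1 - 1}. p i) + (\<Sum>i\<in>{i1..i2}. p i)"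
    unfolding split(1) by (rule sum.union_disjoint) (use split(2) in auto)
  moreover have "\<bar>real (card (S \<inter> {1..i2})) - (\<Sum>i\<in>{1..i2}. p i)\<bar> \<le> D"
    "\<bar>real (card (S \<inter> {1..i1 - 1})) - (\<Sum>i\<in>{1..i1 - 1}. p i)\<bar> \<le> D"
    using assms S r unfolding prefix_disc_le_def by (meson diff_le_self order_trans)+
  ultimately show "\<bar>real (card (S \<inter> {i1..i2})) - (\<Sum>i\<in>{i1..i2}. p i)\<bar> \<le> 2 * D"
    unfolding abs_le_iff by simp
qed

lemma prefix_disc_le_return_pmf:
  assumes p01: "\<forall>l\<in>{1..n}. p l = 0 \<or> p l = 1"
  shows "prefix_disc_le n p (return_pmf {l\<in>{1..n}. p l = 1}) 0"
  unfolding prefix_disc_le_def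
proof (intro ballI allI impI)
  fix S k assume S: "S \<in> set_pmf (return_pmf {l\<in>{1..n}. p l = 1})" and k: "k \<le> n"
  have sub: "{1..k} \<subseteq> {1..n}" using k by auto
  have "\<forall>l\<in>{1..k}. 0 \<le> p l \<and> p l \<le> 1" using p01 sub by fastforce
  then have "\<bar>real (card (S \<inter> {1..k})) - (\<Sum>i\<in>{1..k}. p i)\<bar> \<le> real (card {l\<in>{1..k}. 0 < p l \<and> p l < 1})"
    using sub varopt_marginal[OF varopt_return_pmf[OF p01]]
    by (intro discrepancy_le_card_fractional[OF _ S]) auto
  also have "{l\<in>{1..k}. 0 < p l \<and> p l < 1} = {}" using p01 sub by fastforce
  finally show "\<bar>real (card (S \<inter> {1..k})) - (\<Sum>i\<in>{1..k}. p i)\<bar> \<le> 0" by simp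
qed

lemma prefix_disc_le_mix_leftmost_pair:
  assumes vo: "varopt n p \<Omega>" and supp: "set_pmf \<Omega> \<subseteq> set_pmf \<Omega>A \<union> set_pmf \<Omega>B"
    and rng: "\<forall>l\<in>{1..n}. 0 \<le> p l \<and> p l \<le> 1"
    and A: "prefix_disc_le n (p(i := a1, j := a2)) \<Omega>A 1"
    and B: "prefix_disc_le n (p(i := b1, j := b2)) \<Omega>B 1"
    and ij: "1 \<le> i" "i < j" and sums: "a1 + a2 = p i + p j" "b1 + b2 = p i + p j"
    and leftmost: "\<forall>l\<in>fractional_keys n p. l = i \<or> j \<le> l"
  shows "prefix_disc_le n p \<Omega> 1"
  unfolding prefix_disc_le_def
proof (intro ballI allI impI)
  fix S k assume S: "S \<in> set_pmf \<Omega>" and k: "k \<le> n"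
  show "\<bar>real (card (S \<inter> {1..k})) - (\<Sum>i\<in>{1..k}. p i)\<bar> \<le> 1"
  proof (cases "j \<le> k")
    case True
    then have "i \<in> {1..k}" "j \<in> {1..k}" using ij by auto
    then have "sum (p(i := a1, j := a2)) {1..k} = sum p {1..k}"
      "sum (p(i := b1, j := b2)) {1..k} = sum p {1..k}"
      using ij sums by (intro sum_update_pair; simp)+
    then show ?thesis
      using S supp A B k unfolding prefix_disc_le_def by fastforce
  next
    case False
    then have "{l\<in>{1..k}. 0 < p l \<and> p l < 1} \<subseteq> {i}"
      using leftmost k by (fastforce simp: fractional_keys_def)
    then have "card {l\<in>{1..k}. 0 < p l \<and> p l < 1} \<le> 1"
      using card_mono[of "{i}"] by fastforce
    moreover have "\<bar>real (card (S \<inter> {1..k})) - (\<Sum>i\<in>{1..k}. p i)\<bar>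
        \<le> real (card {l\<in>{1..k}. 0 < p l \<and> p l < 1})"
      using k rng varopt_marginal[OF vo] by (intro discrepancy_le_card_fractional[OF _ S]) auto
    ultimately show ?thesis by linarith
  qed
qed

lemma prefix_disc_le_mono:
  assumes "prefix_disc_le n p \<Omega> D" "D \<le> D'"
  shows "prefix_disc_le n p \<Omega> D'"
  using assms unfolding prefix_disc_le_def by (meson order_trans)

lemma varopt_prefix_disc_le_1:
  assumes "valid_probs n p"
  shows "\<exists>\<Omega>. varopt n p \<Omega> \<and> prefix_disc_le n p \<Omega> 1"
  using assms
proof (induction "card (fractional_keys n p)" arbitrary: p rule: less_induct)
  case less
  have rng: "\<forall>l\<in>{1..n}. 0 \<le> p l \<and> p l \<le> 1" using less.prems by (simp add: valid_probs_def)
  show ?case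
  proof (cases "fractional_keys n p = {}")
    case True
    then have p01: "\<forall>l\<in>{1..n}. p l = 0 \<or> p l = 1" using rng by (force simp: fractional_keys_def)
    show ?thesis
      using varopt_return_pmf[OF p01] prefix_disc_le_mono[OF prefix_disc_le_return_pmf[OF p01]] by auto
  next
    case False
    obtain i j where i: "i \<in> fractional_keys n p" and j: "j \<in> fractional_keys n p" and "i < j"
      and leftmost: "\<forall>l\<in>fractional_keys n p. l = i \<or> j \<le> l"
      by (rule two_leftmost_fractional_keys[OF less.prems False])
    then have ij: "i \<noteq> j" "i \<in> {1..n}" "j \<in> {1..n}" "0 < p i" "p i < 1" "0 < p j" "p j < 1"
      by (auto simp: fractional_keys_def)
    obtain lam a1 a2 b1 b2 where lam: "0 \<le> lam" "lam \<le> 1"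
      and marg: "lam * a1 + (1 - lam) * b1 = p i" "lam * a2 + (1 - lam) * b2 = p j"
      and sums: "a1 + a2 = p i + p j" "b1 + b2 = p i + p j"
      and rngs: "a1 \<in> {0..1}" "a2 \<in> {0..1}" "b1 \<in> {0..1}" "b2 \<in> {0..1}"
      and settled: "a1 \<in> {0, 1} \<or> a2 \<in> {0, 1}" "b1 \<in> {0, 1} \<or> b2 \<in> {0, 1}"
      and corr: "lam * (a1 * a2) + (1 - lam) * (b1 * b2) \<le> p i * p j"
        "lam * ((1 - a1) * (1 - a2)) + (1 - lam) * ((1 - b1) * (1 - b2)) \<le> (1 - p i) * (1 - p j)"
      by (rule pair_aggregation[OF ij(4-7)])
    define pA where "pA = p(i := a1, j := a2)"
    define pB where "pB = p(i := b1, j := b2)"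
    have "valid_probs n pA" "valid_probs n pB"
      unfolding pA_def pB_def using valid_probs_update_pair[OF less.prems ij(2,3,1)] rngs sums by simp_all
    moreover have "card (fractional_keys n pA) < card (fractional_keys n p)"
      "card (fractional_keys n pB) < card (fractional_keys n p)"
      unfolding pA_def pB_def
      using fractional_keys_update_pair_psubset[OF i j ij(1)] settled
      by (simp_all add: psubset_card_mono fractional_keys_def)
    ultimately obtain \<Omega>A \<Omega>B where A: "varopt n pA \<Omega>A" "prefix_disc_le n pA \<Omega>A 1"
      and B: "varopt n pB \<Omega>B" "prefix_disc_le n pB \<Omega>B 1"
      using less.hyps by meson
    have vo: "varopt n p (mix_pmf lam \<Omega>A \<Omega>B)"
      using varopt_mix_pair[OF A(1)[unfolded pA_def] B(1)[unfolded pB_def] ij(1-3) rng lam marg sums corr] .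
    moreover have "prefix_disc_le n p (mix_pmf lam \<Omega>A \<Omega>B) 1"
      using prefix_disc_le_mix_leftmost_pair[OF vo set_pmf_mix_pmf_subset rng
          A(2)[unfolded pA_def] B(2)[unfolded pB_def] _ \<open>i < j\<close> sums leftmost] ij(2) by simp
    ultimately show ?thesis by blast
  qed
qed

section \<open>Counting low-discrepancy samples\<close>

lemma pmf_le_prod_if_varopt:
  assumes "varopt n p \<Omega>" "S \<subseteq> {1..n}"
  shows "pmf \<Omega> S \<le> (\<Prod>i\<in>S. p i)"
proof -
  have "pmf \<Omega> S = measure_pmf.prob \<Omega> {S}" by (simp add: measure_pmf_single)
  also have "\<dots> \<le> measure_pmf.prob \<Omega> {T. S \<subseteq> T}" by (rule measure_pmf.finite_measure_mono) auto
  also have "\<dots> \<le> (\<Prod>i\<in>S. p i)" by (rule varopt_inclusion[OF assms])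
  finally show ?thesis .
qed

definition low_disc_subsets :: "nat \<Rightarrow> nat \<Rightarrow> nat \<Rightarrow> real \<Rightarrow> nat set set" where
  "low_disc_subsets m n s D = {S. S \<subseteq> {1..n} \<and> card S = s \<and>
     (\<forall>i1 i2. 1 \<le> i1 \<and> i1 \<le> i2 \<and> i2 \<le> n \<longrightarrow>
        \<bar>real (card (S \<inter> {i1..i2})) - (real i2 - real i1 + 1) / real m\<bar> \<le> D)}"

lemma low_disc_subsetsD:
  assumes "S \<in> low_disc_subsets m n s D"
  shows "S \<subseteq> {1..n}" "card S = s" "finite S"
    and "\<And>i1 i2. 1 \<le> i1 \<Longrightarrow> i1 \<le> i2 \<Longrightarrow> i2 \<le> n \<Longrightarrow>
      \<bar>real (card (S \<inter> {i1..i2})) - (real i2 - real i1 + 1) / real m\<bar> \<le> D"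
  using assms finite_subset[of S "{1..n}"] unfolding low_disc_subsets_def by auto

lemma set_pmf_subset_low_disc_subsets:
  assumes "m \<ge> 1" and vo: "varopt (m * s) (\<lambda>_. 1 / real m) \<Omega>"
    and disc: "interval_disc_le (m * s) (\<lambda>_. 1 / real m) \<Omega> D"
  shows "set_pmf \<Omega> \<subseteq> low_disc_subsets m (m * s) s D"
proof
  fix S assume S: "S \<in> set_pmf \<Omega>"
  have "real (card S) = real s" using varopt_card[OF vo S] assms(1) by simp
  moreover have "\<bar>real (card (S \<inter> {i1..i2})) - (real i2 - real i1 + 1) / real m\<bar> \<le> D"
    if "1 \<le> i1" "i1 \<le> i2" "i2 \<le> m * s" for i1 i2
  proof -
    have "(\<Sum>i\<in>{i1..i2}. 1 / real m) = (real i2 - real i1 + 1) / real m"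
      using that(2) by simp
    moreover have "\<bar>real (card (S \<inter> {i1..i2})) - (\<Sum>i\<in>{i1..i2}. 1 / real m)\<bar> \<le> D"
      using disc S that unfolding interval_disc_le_def by blast
    ultimately show ?thesis by (simp only:)
  qed
  ultimately show "S \<in> low_disc_subsets m (m * s) s D"
    using varopt_support[OF vo S] unfolding low_disc_subsets_def by simp
qed

lemma strict_sorted_nth_less_iff:
  fixes xs :: "'a::linorder list"
  assumes "sorted_wrt (<) xs" "i < length xs" "j < length xs"
  shows "xs ! i < xs ! j \<longleftrightarrow> i < j"
  using assms by (metis not_less_iff_gr_or_eq sorted_wrt_nth_less)

lemma card_inter_nth_range_ge:
  fixes xs :: "nat list"
  assumes sorted: "sorted_wrt (<) xs" and "a \<le> b" "b < length xs"
  shows "b - a + 1 \<le> card (set xs \<inter> {xs ! a..xs ! b})"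
proof -
  have "(!) xs ` {a..b} \<subseteq> set xs \<inter> {xs ! a..xs ! b}"
    using assms strict_sorted_nth_less_iff[OF sorted] by (fastforce simp: le_less)
  moreover have "inj_on ((!) xs) {a..b}"
    using assms strict_sorted_nth_less_iff[OF sorted] by (intro inj_onI) (metis atLeastAtMost_iff
        le_less_trans linorder_neqE_nat order_less_irrefl)
  ultimately show ?thesis
    using card_mono[of "set xs \<inter> {xs ! a..xs ! b}" "(!) xs ` {a..b}"] card_image assms(2) by fastforce
qed

lemma card_inter_between_nth_le:
  fixes xs :: "nat list"
  assumes sorted: "sorted_wrt (<) xs" and "j < k" "k < length xs"
  shows "card (set xs \<inter> {xs ! j + 1..xs ! k - 1}) \<le> k - j - 1"
proof -
  have "set xs \<inter> {xs ! j + 1..xs ! k - 1} \<subseteq> (!) xs ` {j + 1..k - 1}"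
  proof
    fix y assume y: "y \<in> set xs \<inter> {xs ! j + 1..xs ! k - 1}"
    then obtain i where i: "i < length xs" "y = xs ! i" by (auto simp: in_set_conv_nth)
    with y have "xs ! j < xs ! i" "xs ! i < xs ! k" by auto
    then have "j < i" "i < k" using strict_sorted_nth_less_iff[OF sorted] i assms by auto
    then show "y \<in> (!) xs ` {j + 1..k - 1}" using i by auto
  qed
  then have "card (set xs \<inter> {xs ! j + 1..xs ! k - 1}) \<le> card ((!) xs ` {j + 1..k - 1})"
    by (intro card_mono) auto
  also have "\<dots> \<le> card {j + 1..k - 1}" by (rule card_image_le) auto
  finally show ?thesis by simp
qed

lemma low_disc_sorted_list:
  assumes "S \<in> low_disc_subsets m n s D"
  defines "xs \<equiv> sorted_list_of_set S"
  shows "sorted_wrt (<) xs" and set: "set xs = S" and len: "length xs = s"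
    and "\<And>k. k < s \<Longrightarrow> xs ! k \<in> {1..n}"
proof -
  note S = low_disc_subsetsD[OF assms(1)]
  show "sorted_wrt (<) xs" unfolding xs_def by simp
  show set: "set xs = S" unfolding xs_def using S(3) by simp
  show len: "length xs = s" unfolding xs_def using S(2) by simp
  show "xs ! k \<in> {1..n}" if "k < s" for k
    using nth_mem[of k xs] set len S(1) that by blast
qed

text \<open>The \<open>k\<close>-th smallest element of \<open>S\<close>, counting from \<open>k = 0\<close>, compared with its ideal position
  \<open>(k + 1) m\<close> when every key has probability \<open>1 / m\<close>.\<close>
definition rank_offset :: "nat \<Rightarrow> nat set \<Rightarrow> nat \<Rightarrow> int" where
  "rank_offset m S k = int (sorted_list_of_set S ! k) - int ((k + 1) * m)"

lemma rank_offset_increase_le: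
  assumes S: "S \<in> low_disc_subsets m n s D" and m: "m \<ge> 1" and D: "1 \<le> D" and jk: "j < k" "k < s"
  shows "real_of_int (rank_offset m S k - rank_offset m S j) \<le> real m * (D - 1) + 1"
proof -
  define xs where "xs = sorted_list_of_set S"
  note xs = low_disc_sorted_list[OF S, folded xs_def]
  show ?thesis
  proof (cases "xs ! j + 1 \<le> xs ! k - 1")
    case True
    have "card (S \<inter> {xs ! j + 1..xs ! k - 1}) \<le> k - j - 1"
      using card_inter_between_nth_le[OF xs(1) jk(1)] jk xs(2,3) by simp
    then have "real (card (S \<inter> {xs ! j + 1..xs ! k - 1})) \<le> real k - real j - 1"
      using jk by linarith
    moreover have "\<bar>real (card (S \<inter> {xs ! j + 1..xs ! k - 1}))
        - (real (xs ! k - 1) - real (xs ! j + 1) + 1) / real m\<bar> \<le> D"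
      using low_disc_subsetsD(4)[OF S, of "xs ! j + 1" "xs ! k - 1"] True xs(4)[OF jk(2)]
      by (simp add: le_diff_conv)
    moreover have "real (xs ! k - 1) = real (xs ! k) - 1" using xs(4)[OF jk(2)] by simp
    ultimately have "(real (xs ! k) - real (xs ! j) - 1) / real m \<le> D + real k - real j - 1"
      by (simp add: abs_le_iff)
    then have "real (xs ! k) - real (xs ! j) - 1 \<le> real m * (D + real k - real j - 1)"
      using m by (simp add: field_simps)
    then show ?thesis unfolding rank_offset_def xs_def[symmetric] by (simp add: algebra_simps)
  next
    case False
    then have "real (xs ! k) \<le> real (xs ! j) + 1" by linarith
    moreover have "real m * real j \<le> real m * real k" using jk by (intro mult_left_mono) auto
    moreover have "real m \<le> real m * D" using mult_left_mono[OF D, of "real m"] by simp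
    ultimately show ?thesis
      unfolding rank_offset_def xs_def[symmetric] by (simp add: algebra_simps)
  qed
qed

lemma rank_offset_decrease_le:
  assumes S: "S \<in> low_disc_subsets m n s D" and m: "m \<ge> 1" and jk: "j < k" "k < s"
  shows "real_of_int (rank_offset m S j - rank_offset m S k) \<le> real m * (D - 1) + 1"
proof -
  define xs where "xs = sorted_list_of_set S"
  note xs = low_disc_sorted_list[OF S, folded xs_def]
  have "real k - real j + 1 \<le> real (card (S \<inter> {xs ! j..xs ! k}))"
    using card_inter_nth_range_ge[OF xs(1), of j k] jk xs(2,3) by simp
  moreover have "xs ! j \<le> xs ! k" using strict_sorted_nth_less_iff[OF xs(1), of j k] jk xs(3) by simp
  then have "\<bar>real (card (S \<inter> {xs ! j..xs ! k})) - (real (xs ! k) - real (xs ! j) + 1) / real m\<bar> \<le> D"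
    using low_disc_subsetsD(4)[OF S] xs(4) jk by simp
  ultimately have "real k - real j + 1 - (real (xs ! k) - real (xs ! j) + 1) / real m \<le> D"
    by linarith
  then have "real m * (real k - real j + 1) - (real (xs ! k) - real (xs ! j) + 1) \<le> real m * D"
    using m by (simp add: field_simps)
  then show ?thesis unfolding rank_offset_def xs_def[symmetric] by (simp add: algebra_simps)
qed

lemma rank_offset_ge:
  assumes S: "S \<in> low_disc_subsets m n s D" and m: "m \<ge> 1" and D: "D \<le> 2" and k: "k < s"
  shows "- 2 * int m \<le> rank_offset m S k"
proof -
  define xs where "xs = sorted_list_of_set S"
  note xs = low_disc_sorted_list[OF S, folded xs_def]
  have "1 \<le> xs ! 0" using xs(4)[of 0] k by simp
  have "k + 1 \<le> card (set xs \<inter> {xs ! 0..xs ! k})"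
    using card_inter_nth_range_ge[OF xs(1), of 0 k] k xs(3) by simp
  also have "\<dots> \<le> card (S \<inter> {1..xs ! k})"
    using \<open>1 \<le> xs ! 0\<close> xs(2) low_disc_subsetsD(3)[OF S] by (intro card_mono) auto
  finally have "real k + 1 \<le> real (card (S \<inter> {1..xs ! k}))" by linarith
  moreover have "\<bar>real (card (S \<inter> {1..xs ! k})) - real (xs ! k) / real m\<bar> \<le> D"
    using low_disc_subsetsD(4)[OF S, of 1 "xs ! k"] xs(4)[OF k] by simp
  ultimately have "real k + 1 - real (xs ! k) / real m \<le> 2" using D by linarith
  then have "real m * (real k + 1) - real (xs ! k) \<le> 2 * real m"
    using m by (simp add: field_simps)
  then have "real_of_int (- 2 * int m) \<le> real_of_int (rank_offset m S k)"
    unfolding rank_offset_def xs_def[symmetric] by (simp add: algebra_simps)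
  then show ?thesis by linarith
qed

lemma rank_offset_0_le:
  assumes S: "S \<in> low_disc_subsets m n s D" and m: "m \<ge> 1" and D: "D \<le> 2" and s: "0 < s"
  shows "rank_offset m S 0 \<le> int m + 1"
proof -
  define xs where "xs = sorted_list_of_set S"
  note xs = low_disc_sorted_list[OF S, folded xs_def]
  have "real (xs ! 0) \<le> 2 * real m + 1"
  proof (cases "xs ! 0 \<ge> 2")
    case True
    have "S \<inter> {1..xs ! 0 - 1} = {}"
      using xs(2,3) strict_sorted_nth_less_iff[OF xs(1), of _ 0] by (fastforce simp: in_set_conv_nth)
    then have "(real (xs ! 0) - 1) / real m \<le> D"
      using low_disc_subsetsD(4)[OF S, of 1 "xs ! 0 - 1"] True xs(4)[OF s] by simp
    then have "real (xs ! 0) - 1 \<le> D * real m" using m by (simp add: field_simps)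
    also have "\<dots> \<le> 2 * real m" using D by (intro mult_right_mono) auto
    finally show ?thesis by simp
  qed (use m in simp)
  then show ?thesis unfolding rank_offset_def xs_def[symmetric] by simp
qed

lemma rank_offset_diff_le:
  assumes S: "S \<in> low_disc_subsets m n s D" and m: "m \<ge> 1" and D: "1 \<le> D" and jk: "j < s" "k < s"
  shows "real_of_int (rank_offset m S k - rank_offset m S j) \<le> real m * (D - 1) + 1"
proof (cases j k rule: linorder_cases)
  case less
  then show ?thesis using rank_offset_increase_le[OF S m D _ jk(2)] by simp
next
  case equal
  then show ?thesis using D by simp
next
  case greater
  then show ?thesis using rank_offset_decrease_le[OF S m _ jk(1)] by simp
qed

lemma low_disc_subsets_subset_image:
  assumes m: "m \<ge> 1" and s: "s \<ge> 1" and D: "1 \<le> D" "D \<le> 2"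
  defines "W \<equiv> nat \<lfloor>real m * (D - 1) + 1\<rfloor>"
  shows "low_disc_subsets m n s D \<subseteq>
    (\<lambda>(t, d). (\<lambda>k. nat (t + int ((k + 1) * m) + int (d k))) ` {..<s}) `
      ({- 2 * int m..int m + 1} \<times> PiE {..<s} (\<lambda>_. {0..W}))"
proof
  fix S assume S: "S \<in> low_disc_subsets m n s D"
  define xs where "xs = sorted_list_of_set S"
  note xs = low_disc_sorted_list[OF S, folded xs_def]
  define z where "z = rank_offset m S"
  define t where "t = Min (z ` {..<s})"
  have fin: "finite (z ` {..<s})" and ne: "z ` {..<s} \<noteq> {}"
    using s by (auto simp: lessThan_empty_iff)
  obtain j0 where j0: "j0 < s" "t = z j0" using Min_in[OF fin ne] unfolding t_def by auto
  have t_le: "t \<le> z k" if "k < s" for k unfolding t_def using fin that by simp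
  have "t \<in> {- 2 * int m..int m + 1}"
    using rank_offset_ge[OF S m D(2) j0(1)] rank_offset_0_le[OF S m D(2)] t_le[of 0] s j0(2)
    unfolding z_def by auto
  moreover define d where "d = (\<lambda>k. if k < s then nat (z k - t) else undefined)"
  have W: "int W = \<lfloor>real m * (D - 1) + 1\<rfloor>" unfolding W_def using D by simp
  have "z k - t \<le> int W" if "k < s" for k
    unfolding W le_floor_iff using rank_offset_diff_le[OF S m D(1) j0(1) that] j0(2) z_def by simp
  then have "d \<in> PiE {..<s} (\<lambda>_. {0..W})"
    unfolding d_def by (auto simp: PiE_def extensional_def nat_le_iff)
  moreover have "(\<lambda>k. nat (t + int ((k + 1) * m) + int (d k))) ` {..<s} = (!) xs ` {..<s}"
    using t_le by (intro image_cong) (auto simp: d_def z_def rank_offset_def xs_def)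
  then have "S = (\<lambda>k. nat (t + int ((k + 1) * m) + int (d k))) ` {..<s}"
    using xs(2,3) by (auto simp: in_set_conv_nth)
  ultimately show "S \<in> (\<lambda>(t, d). (\<lambda>k. nat (t + int ((k + 1) * m) + int (d k))) ` {..<s}) `
      ({- 2 * int m..int m + 1} \<times> PiE {..<s} (\<lambda>_. {0..W}))"
    by blast
qed

lemma card_low_disc_subsets_le:
  assumes m: "m \<ge> 1" and s: "s \<ge> 1" and D: "1 \<le> D" "D \<le> 2"
  shows "real (card (low_disc_subsets m n s D)) \<le> (3 * real m + 2) * (real m * (D - 1) + 2) ^ s"
proof -
  define W where "W = nat \<lfloor>real m * (D - 1) + 1\<rfloor>"
  define T where "T = {- 2 * int m..int m + 1} \<times> PiE {..<s} (\<lambda>_. {0..W})"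
  have finT: "finite T" unfolding T_def by (auto intro!: finite_PiE)
  define F where "F = (\<lambda>(t, d). (\<lambda>k. nat (t + int ((k + 1) * m) + int (d k))) ` {..<s})"
  have "low_disc_subsets m n s D \<subseteq> F ` T"
    using low_disc_subsets_subset_image[OF assms] unfolding F_def T_def W_def .
  then have "card (low_disc_subsets m n s D) \<le> card (F ` T)"
    using finT by (intro card_mono) auto
  also have "\<dots> \<le> card T" by (rule card_image_le[OF finT])
  also have "card T = (3 * m + 2) * (W + 1) ^ s"
    unfolding T_def by (simp add: card_cartesian_product card_PiE nat_add_distrib)
  finally have "real (card (low_disc_subsets m n s D)) \<le> real ((3 * m + 2) * (W + 1) ^ s)"
    by (simp only: of_nat_le_iff)
  also have "\<dots> = (3 * real m + 2) * (real W + 1) ^ s" by (simp add: algebra_simps)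
  also have "\<dots> \<le> (3 * real m + 2) * (real m * (D - 1) + 2) ^ s"
  proof -
    have "0 \<le> real m * (D - 1)" using D by simp
    then have "real W \<le> real m * (D - 1) + 1" unfolding W_def by linarith
    then show ?thesis by (intro mult_left_mono power_mono) auto
  qed
  finally show ?thesis .
qed

lemma no_varopt_uniform_low_disc:
  assumes m: "m \<ge> 1" and s: "s \<ge> 1" and D: "1 \<le> D" "D \<le> 2"
    and few: "(3 * real m + 2) * (real m * (D - 1) + 2) ^ s < real m ^ s"
  shows "\<not> (\<exists>\<Omega>. varopt (m * s) (\<lambda>_. 1 / real m) \<Omega> \<and> interval_disc_le (m * s) (\<lambda>_. 1 / real m) \<Omega> D)"
proof
  assume "\<exists>\<Omega>. varopt (m * s) (\<lambda>_. 1 / real m) \<Omega> \<and> interval_disc_le (m * s) (\<lambda>_. 1 / real m) \<Omega> D"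
  then obtain \<Omega> where vo: "varopt (m * s) (\<lambda>_. 1 / real m) \<Omega>"
    and disc: "interval_disc_le (m * s) (\<lambda>_. 1 / real m) \<Omega> D" by blast
  let ?G = "low_disc_subsets m (m * s) s D"
  have fin: "finite ?G"
    by (rule finite_subset[of _ "Pow {1..m * s}"]) (auto simp: low_disc_subsets_def)
  have pmf_le: "pmf \<Omega> S \<le> (1 / real m) ^ s" if "S \<in> ?G" for S
  proof -
    have "S \<subseteq> {1..m * s}" "card S = s" using low_disc_subsetsD[OF that] by auto
    then show ?thesis using pmf_le_prod_if_varopt[OF vo, of S] by simp
  qed
  have "1 = (\<Sum>S\<in>?G. pmf \<Omega> S)"
    using sum_pmf_eq_1[OF fin set_pmf_subset_low_disc_subsets[OF m vo disc]] by simp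
  also have "\<dots> \<le> (\<Sum>S\<in>?G. (1 / real m) ^ s)" by (rule sum_mono) (rule pmf_le)
  also have "\<dots> = real (card ?G) / real m ^ s" by (simp add: power_divide)
  also have "\<dots> \<le> (3 * real m + 2) * (real m * (D - 1) + 2) ^ s / real m ^ s"
    by (rule divide_right_mono[OF card_low_disc_subsets_le[OF m s D]]) simp
  also have "\<dots> < 1" using few m by (subst divide_less_eq_1_pos) auto
  finally show False by simp
qed

text \<open>With \<open>\<rho> = D / 2 < 1\<close> one has \<open>m (D - 1) + 2 \<le> \<rho> m\<close> as soon as \<open>m (2 - D) \<ge> 4\<close>;
  then \<open>\<rho>\<^sup>s\<close> eventually beats the factor \<open>3 m + 2\<close>.\<close>
lemma uniform_counterexample_parameters:
  fixes D :: real
  assumes D: "1 \<le> D" "D < 2"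
  obtains m s :: nat where "m \<ge> 1" "s \<ge> 1" "(3 * real m + 2) * (real m * (D - 1) + 2) ^ s < real m ^ s"
proof -
  define \<rho> where "\<rho> = D / 2"
  have \<rho>: "0 < \<rho>" "\<rho> < 1" unfolding \<rho>_def using D by auto
  define m where "m = nat \<lceil>4 / (2 - D)\<rceil> + 1"
  have m: "m \<ge> 1" unfolding m_def by simp
  have "4 / (2 - D) \<le> real m" unfolding m_def by linarith
  then have "4 \<le> real m * (2 - D)" using D by (simp add: field_simps)
  then have key: "real m * (D - 1) + 2 \<le> real m * \<rho>" unfolding \<rho>_def by (simp add: algebra_simps)
  obtain s0 where "\<rho> ^ s0 < 1 / (3 * real m + 2)"
    using real_arch_pow_inv[of "1 / (3 * real m + 2)" \<rho>] \<rho> by auto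
  then have "(3 * real m + 2) * \<rho> ^ s0 < 1" by (simp add: less_divide_eq mult.commute)
  moreover have "(3 * real m + 2) * \<rho> ^ Suc s0 \<le> (3 * real m + 2) * \<rho> ^ s0"
    using \<rho> by (intro mult_left_mono) (auto simp: mult_left_le_one_le)
  ultimately have "(3 * real m + 2) * \<rho> ^ Suc s0 < 1" by linarith
  have "(3 * real m + 2) * (real m * (D - 1) + 2) ^ Suc s0 \<le> (3 * real m + 2) * (real m * \<rho>) ^ Suc s0"
    using key D by (intro mult_left_mono power_mono) auto
  also have "\<dots> = ((3 * real m + 2) * \<rho> ^ Suc s0) * real m ^ Suc s0"
    by (simp add: power_mult_distrib)
  also have "\<dots> < real m ^ Suc s0"
    using \<open>(3 * real m + 2) * \<rho> ^ Suc s0 < 1\<close> m by simp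
  finally have "(3 * real m + 2) * (real m * (D - 1) + 2) ^ Suc s0 < real m ^ Suc s0" .
  from that[OF m _ this] show ?thesis by simp
qed

lemma valid_probs_uniform:
  assumes "m \<ge> 1"
  shows "valid_probs (m * s) (\<lambda>_. 1 / real m)"
  using assms by (simp add: valid_probs_def)

lemma interval_disc_le_mono:
  assumes "interval_disc_le n p \<Omega> D" "D \<le> D'"
  shows "interval_disc_le n p \<Omega> D'"
  using assms unfolding interval_disc_le_def by (meson order_trans)

theorem theorem1:
  shows "(\<forall>n::nat. \<forall>p. n \<ge> 1 \<and> valid_probs n p \<longrightarrow>
            (\<exists>\<Omega>. varopt n p \<Omega> \<and> interval_disc_le n p \<Omega> 2))
       \<and> (\<forall>D::real. D < 2 \<longrightarrow>
            (\<exists>n::nat. \<exists>p. n \<ge> 1 \<and> valid_probs n p \<and>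
               \<not> (\<exists>\<Omega>. varopt n p \<Omega> \<and> interval_disc_le n p \<Omega> D)))"
proof (intro conjI allI impI)
  fix n :: nat and p assume "n \<ge> 1 \<and> valid_probs n p"
  then obtain \<Omega> where "varopt n p \<Omega>" "prefix_disc_le n p \<Omega> 1"
    using varopt_prefix_disc_le_1 by blast
  then show "\<exists>\<Omega>. varopt n p \<Omega> \<and> interval_disc_le n p \<Omega> 2"
    using interval_disc_le_if_prefix_disc_le[of n p \<Omega> 1] by auto
next
  fix D :: real assume "D < 2"
  then obtain m s where m: "m \<ge> 1" and s: "s \<ge> 1"
    and few: "(3 * real m + 2) * (real m * (max D 1 - 1) + 2) ^ s < real m ^ s"
    using uniform_counterexample_parameters[of "max D 1"] by auto
  show "\<exists>n p. n \<ge> 1 \<and> valid_probs n p \<and> \<not> (\<exists>\<Omega>. varopt n p \<Omega> \<and> interval_disc_le n p \<Omega> D)"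
  proof (intro exI conjI)
    show "m * s \<ge> 1" using m s by simp
    show "valid_probs (m * s) (\<lambda>_. 1 / real m)" using m by (rule valid_probs_uniform)
    have "\<not> (\<exists>\<Omega>. varopt (m * s) (\<lambda>_. 1 / real m) \<Omega> \<and> interval_disc_le (m * s) (\<lambda>_. 1 / real m) \<Omega> (max D 1))"
      using \<open>D < 2\<close> by (intro no_varopt_uniform_low_disc[OF m s _ _ few]) auto
    then show "\<not> (\<exists>\<Omega>. varopt (m * s) (\<lambda>_. 1 / real m) \<Omega> \<and> interval_disc_le (m * s) (\<lambda>_. 1 / real m) \<Omega> D)"
      using interval_disc_le_mono[OF _ max.cobounded1] by blast
  qed
qed

end
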